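(* Let $N,s\in\mathbb{N}$ with $N>2$ and $1\le s<N$, and let $t\in\mathbb{R}$ with $0<t<s$. Then there exist unique $\lambda=\lambda(s,t)\in\left[\frac{\pi}{2}-\frac{\pi}{2N}s,\frac{\pi}{2}\right)$ and $C=C(s,t)\in(0,\pi)$ such that $$\delta(\lambda,C)\equiv\frac{\pi}{N}s\quad\text{and}\quad\beta(\lambda,C)\equiv-\frac{\pi}{N}t.$$ Furthermore: (i) $\lambda(s,\frac{s}{2})=\frac{\pi}{2}-\frac{\pi}{2N}s$ and $C(s,\frac{s}{2})=\frac{\pi}{2}$; (ii) for fixed $s$, $\lambda(s,-)$ is two-to-one on $(0,s)$, with $\lambda(s,s-t)=\lambda(s,t)$; (iii) for fixed $s$, $C(s,-)$ is bijective on $(0,s)$, with $C(s,s-t)=\pi-C(s,t)$.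
   Context: $\equiv$ denotes equality modulo $2\pi$. For $\lambda\in[0,\frac{\pi}{2})$ and $\varphi\in\mathbb{R}$ define (modulo $2\pi$) $\beta(\lambda,\varphi)=\varphi-2\arctan\left(\frac{\cos\frac{\lambda}{2}\sin\varphi}{\sin\frac{\lambda}{2}+\cos\frac{\lambda}{2}\cos\varphi}\right)$ and $\delta(\lambda,\varphi)=\beta(\lambda,\varphi+\pi)-\beta(\lambda,\varphi)\equiv\pi-2\arctan(\sin\varphi\tan\lambda)$. *)

theory Defs
  imports Complex_Main
begin

definition cong2pi :: "real \<Rightarrow> real \<Rightarrow> bool" where
  "cong2pi x y \<longleftrightarrow> (\<exists>k::int. x - y = 2 * pi * of_int k)"

text \<open>When the denominator vanishes (the numerator is then nonzero for
  lambda in [0, pi/2)), the arctan is +-pi/2, so 2 arctan is +-pi, which is pi modulo 2 pi.\<close>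
definition beta :: "real \<Rightarrow> real \<Rightarrow> real" where
  "beta l \<phi> =
     (let D = sin (l/2) + cos (l/2) * cos \<phi>
      in \<phi> - (if D = 0 then pi else 2 * arctan (cos (l/2) * sin \<phi> / D)))"

definition delta :: "real \<Rightarrow> real \<Rightarrow> real" where
  "delta l \<phi> = beta l (\<phi> + pi) - beta l \<phi>"

definition is_sol :: "nat \<Rightarrow> nat \<Rightarrow> real \<Rightarrow> real \<Rightarrow> real \<Rightarrow> bool" where
  "is_sol N s t l c \<longleftrightarrow>
     l \<in> {pi/2 - pi / (2 * real N) * real s ..< pi/2} \<and> c \<in> {0 <..< pi} \<and>
     cong2pi (delta l c) (pi / real N * real s) \<and>
     cong2pi (beta l c) (- (pi / real N * t))"

definition lam :: "nat \<Rightarrow> nat \<Rightarrow> real \<Rightarrow> real" where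
  "lam N s t = fst (THE p. is_sol N s t (fst p) (snd p))"

definition Cf :: "nat \<Rightarrow> nat \<Rightarrow> real \<Rightarrow> real" where
  "Cf N s t = snd (THE p. is_sol N s t (fst p) (snd p))"

end

theory Submission
  imports Defs
begin

text \<open>For \<open>\<lambda> \<in> [0, \<pi>/2)\<close> the definitions unwind to
  \<open>cos \<beta>(\<lambda>,\<phi>) = (sin \<lambda> + cos \<phi>) / (1 + sin \<lambda> cos \<phi>)\<close>,
  \<open>sin \<beta>(\<lambda>,\<phi>) = - cos \<lambda> sin \<phi> / (1 + sin \<lambda> cos \<phi>)\<close> and
  \<open>\<delta>(\<lambda>,\<phi>) \<equiv> \<pi> - 2 arctan (sin \<phi> tan \<lambda>)\<close>. With \<open>\<theta> = \<pi>s/N\<close>, the condition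
  \<open>\<delta> \<equiv> \<theta>\<close> therefore says exactly \<open>sin C tan \<lambda> = cot (\<theta>/2)\<close>, which determines
  \<open>\<lambda> = \<lambda>(C) \<in> [\<pi>/2 - \<theta>/2, \<pi>/2)\<close>. Since \<open>sin \<beta> < 0\<close>, \<open>\<beta>(\<lambda>(C), C) \<equiv> -\<alpha>(C)\<close> for
  an angle \<open>\<alpha>(C) \<in> (0, \<pi>)\<close>, and the second condition becomes \<open>\<alpha>(C) = \<pi>t/N\<close>.
  On \<open>(0, \<pi>/2]\<close> the cosine of \<open>\<alpha>\<close> is strictly decreasing (it is increasing in both
  \<open>sin \<lambda>(C)\<close> and \<open>cos C\<close>), running from 1 at \<open>C = 0\<close> to \<open>cos (\<theta>/2)\<close> at \<open>C = \<pi>/2\<close>;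
  and \<open>\<alpha>(\<pi> - C) = \<theta> - \<alpha>(C)\<close>, because \<open>\<beta>(\<lambda>, \<pi> - C) \<equiv> -\<beta>(\<lambda>, C + \<pi>) = -(\<beta> + \<delta>)(\<lambda>, C)\<close>
  while \<open>\<lambda>(\<pi> - C) = \<lambda>(C)\<close>. So \<open>\<alpha>\<close> is an increasing bijection \<open>(0, \<pi>) \<rightarrow> (0, \<theta>)\<close>,
  \<open>C(s,t) = \<alpha>\<^sup>-\<^sup>1(\<pi>t/N)\<close>, and the symmetries in t come from the reflection \<open>C \<mapsto> \<pi> - C\<close>.\<close>

lemma cong2pi_iff: "cong2pi x y \<longleftrightarrow> cos x = cos y \<and> sin x = sin y"
  unfolding cong2pi_def using sin_cos_eq_iff[of x y] by (metis add_diff_cancel_left' diff_add_cancel)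

lemma cong2pi_sym: "cong2pi x y \<Longrightarrow> cong2pi y x"
  and cong2pi_trans: "cong2pi x y \<Longrightarrow> cong2pi y z \<Longrightarrow> cong2pi x z"
  and cong2pi_minus: "cong2pi x y \<Longrightarrow> cong2pi (- x) (- y)"
  and cong2pi_add: "cong2pi x y \<Longrightarrow> cong2pi u v \<Longrightarrow> cong2pi (x + u) (y + v)"
  by (simp_all add: cong2pi_iff cos_add sin_add)

lemma cong2pi_imp_eq:
  assumes "cong2pi x y" "a \<le> x" "x < a + 2 * pi" "a \<le> y" "y < a + 2 * pi"
  shows "x = y"
proof -
  obtain k :: int where k: "x - y = 2 * pi * k" using assms(1) unfolding cong2pi_def by blast
  have "\<bar>2 * pi * k\<bar> < 2 * pi * 1" using assms(2-5) k by linarith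
  then have "\<bar>k\<bar> < 1" by (simp add: abs_mult)
  then show ?thesis using k by simp
qed

lemma cong2pi_minus_arccos_cos:
  assumes "sin x < 0"
  shows "cong2pi x (- arccos (cos x))" and "0 < arccos (cos x)" and "arccos (cos x) < pi"
proof -
  have "0 < (sin x)\<^sup>2" using assms by simp
  then have "(cos x)\<^sup>2 < 1" using sin_squared_eq[of x] by linarith
  then have cos_bounds: "-1 < cos x" "cos x < 1" by (simp_all add: abs_square_less_1)
  then show "0 < arccos (cos x)" "arccos (cos x) < pi" using arccos_lt_bounded by blast+
  have "sin (arccos (cos x)) = - sin x"
    using cos_bounds assms by (simp add: sin_arccos sin_squared_eq[symmetric])
  then show "cong2pi x (- arccos (cos x))" using cos_bounds by (simp add: cong2pi_iff)
qed

lemma cos_sin_double_arctan_div: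
  fixes d n :: real
  assumes "d \<noteq> 0 \<or> n \<noteq> 0"
  defines "w \<equiv> if d = 0 then pi else 2 * arctan (n / d)"  \<comment> \<open>the convention of \<open>beta\<close> at \<open>d = 0\<close>\<close>
  shows "cos w = (d\<^sup>2 - n\<^sup>2) / (d\<^sup>2 + n\<^sup>2)" and "sin w = 2 * n * d / (d\<^sup>2 + n\<^sup>2)"
proof -
  have "cos w = (d\<^sup>2 - n\<^sup>2) / (d\<^sup>2 + n\<^sup>2) \<and> sin w = 2 * n * d / (d\<^sup>2 + n\<^sup>2)"
  proof (cases "d = 0")
    case True
    then show ?thesis using assms by (simp add: w_def)
  next
    case False
    define u where "u = n / d"
    have w: "w = 2 * arctan u" using False by (simp add: w_def u_def)
    have sq: "(sqrt (1 + u\<^sup>2))\<^sup>2 = 1 + u\<^sup>2" by simp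
    have d2u2: "d\<^sup>2 * u\<^sup>2 = n\<^sup>2" and d2u: "d\<^sup>2 * (2 * u) = 2 * n * d"
      using False by (simp_all add: u_def power_divide power2_eq_square)
    have "cos w = (1 - u\<^sup>2) / (1 + u\<^sup>2)"
      unfolding w cos_double cos_arctan sin_arctan by (simp add: power_divide sq diff_divide_distrib)
    also have "\<dots> = (d\<^sup>2 * (1 - u\<^sup>2)) / (d\<^sup>2 * (1 + u\<^sup>2))" using False by simp
    finally have cos_w: "cos w = (d\<^sup>2 - n\<^sup>2) / (d\<^sup>2 + n\<^sup>2)" using d2u2 by (simp add: algebra_simps)
    have "sin w = 2 * u / (1 + u\<^sup>2)"
      unfolding w sin_double cos_arctan sin_arctan by (simp add: power_divide sq)
    also have "\<dots> = (d\<^sup>2 * (2 * u)) / (d\<^sup>2 * (1 + u\<^sup>2))" using False by simp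
    finally show ?thesis using cos_w d2u2 d2u by (simp add: algebra_simps)
  qed
  then show "cos w = (d\<^sup>2 - n\<^sup>2) / (d\<^sup>2 + n\<^sup>2)" "sin w = 2 * n * d / (d\<^sup>2 + n\<^sup>2)" by simp_all
qed

lemma one_add_sin_mult_cos_pos:
  assumes "0 \<le> l" "l < pi/2"
  shows "0 < 1 + sin l * cos p"
proof -
  have "0 \<le> sin l" "sin l < 1"
    using assms sin_ge_zero[of l] sin_mono_less_eq[of l "pi/2"] by auto
  then have "\<bar>sin l * cos p\<bar> < 1"
    using mult_left_le[OF abs_cos_le_one[of p], of "sin l"] by (simp add: abs_mult)
  then show ?thesis by linarith
qed

lemma
  assumes "0 \<le> l" "l < pi/2"
  shows cos_beta: "cos (beta l p) = (sin l + cos p) / (1 + sin l * cos p)"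
    and sin_beta: "sin (beta l p) = - (cos l * sin p) / (1 + sin l * cos p)"
proof -
  define a b where "a = sin (l/2)" "b = cos (l/2)"
  define x y where "x = cos p" "y = sin p"
  define D n where "D = a + b * x" "n = b * y"
  have sin_l: "sin l = 2 * a * b" and cos_l: "cos l = b\<^sup>2 - a\<^sup>2"
    unfolding a_b_def using sin_double[of "l/2"] cos_double[of "l/2"] by simp_all
  have ab: "a\<^sup>2 + b\<^sup>2 = 1" and xy: "x\<^sup>2 + y\<^sup>2 = 1" unfolding a_b_def x_y_def by simp_all
  have Dn: "D\<^sup>2 + n\<^sup>2 = 1 + sin l * x" unfolding D_n_def sin_l using ab xy by algebra
  then have "D \<noteq> 0 \<or> n \<noteq> 0"
    using one_add_sin_mult_cos_pos[OF assms, of p] unfolding x_y_def by auto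
  note w = cos_sin_double_arctan_div[OF this]
  have beta: "beta l p = p - (if D = 0 then pi else 2 * arctan (n / D))"
    unfolding beta_def D_n_def a_b_def x_y_def Let_def ..
  have "x * (D\<^sup>2 - n\<^sup>2) + y * (2 * n * D) = sin l + x"
    unfolding D_n_def sin_l using ab xy by algebra
  then show "cos (beta l p) = (sin l + cos p) / (1 + sin l * cos p)"
    unfolding beta cos_diff w Dn[symmetric] x_y_def[symmetric]
    by (simp add: add_divide_distrib[symmetric])
  have "y * (D\<^sup>2 - n\<^sup>2) - x * (2 * n * D) = - (cos l * y)"
    unfolding D_n_def cos_l using ab xy by algebra
  then show "sin (beta l p) = - (cos l * sin p) / (1 + sin l * cos p)"
    unfolding beta sin_diff w Dn[symmetric] x_y_def[symmetric]
    by (simp add: diff_divide_distrib[symmetric])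
qed

lemma delta_cong:
  assumes "0 \<le> l" "l < pi/2"
  shows "cong2pi (delta l c) (pi - 2 * arctan (sin c * tan l))"
proof -
  define S C where "S = sin l" "C = cos l"
  define x y where "x = cos c" "y = sin c"
  have "0 < C" unfolding S_C_def using assms by (simp add: cos_gt_zero_pi)
  have SC: "S\<^sup>2 + C\<^sup>2 = 1" and xy: "x\<^sup>2 + y\<^sup>2 = 1" unfolding S_C_def x_y_def by simp_all
  have "0 < 1 + S * x" "0 < 1 - S * x"
    using one_add_sin_mult_cos_pos[OF assms, of c] one_add_sin_mult_cos_pos[OF assms, of "c + pi"]
    unfolding S_C_def x_y_def by simp_all
  have den_eq: "(1 - S * x) * (1 + S * x) = C\<^sup>2 + (S * y)\<^sup>2" using SC xy by algebra
  have tan: "sin c * tan l = (S * y) / C" unfolding S_C_def x_y_def tan_def by simp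
  note w = cos_sin_double_arctan_div[of C "S * y"]
  have "cos (delta l c) = ((S - x) * (S + x) - (C * y)\<^sup>2) / ((1 - S * x) * (1 + S * x))"
    unfolding delta_def cos_diff cos_beta[OF assms] sin_beta[OF assms]
    by (simp add: S_C_def x_y_def times_divide_times_eq diff_divide_distrib[symmetric] power2_eq_square)
  also have "\<dots> = ((S * y)\<^sup>2 - C\<^sup>2) / (C\<^sup>2 + (S * y)\<^sup>2)"
    unfolding den_eq using SC xy by (simp only: left_diff_distrib) algebra
  also have "\<dots> = cos (pi - 2 * arctan (sin c * tan l))"
    unfolding tan using w \<open>0 < C\<close> by (simp add: minus_divide_left)
  finally have cos_eq: "cos (delta l c) = cos (pi - 2 * arctan (sin c * tan l))" .
  have "sin (delta l c) = ((C * y) * (S + x) + (S - x) * (C * y)) / ((1 - S * x) * (1 + S * x))"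
    unfolding delta_def sin_diff cos_beta[OF assms] sin_beta[OF assms]
    by (simp add: S_C_def x_y_def times_divide_times_eq add_divide_distrib[symmetric])
  also have "\<dots> = 2 * (S * y) * C / (C\<^sup>2 + (S * y)\<^sup>2)"
    unfolding den_eq by (simp add: algebra_simps)
  also have "\<dots> = sin (pi - 2 * arctan (sin c * tan l))"
    unfolding tan using w \<open>0 < C\<close> by simp
  finally show ?thesis using cos_eq by (simp add: cong2pi_iff)
qed

lemma sin_eq_sin_iff_0_pi:
  fixes x y :: real
  assumes "0 < x" "x < pi" "0 < y" "y < pi"
  shows "sin x = sin y \<longleftrightarrow> x = y \<or> x = pi - y"
proof -
  have "sin x = cos \<bar>pi/2 - x\<bar>" "sin y = cos \<bar>pi/2 - y\<bar>" by (simp_all add: sin_cos_eq)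
  then have "sin x = sin y \<longleftrightarrow> cos \<bar>pi/2 - x\<bar> = cos \<bar>pi/2 - y\<bar>" by (simp only:)
  also have "\<dots> \<longleftrightarrow> \<bar>pi/2 - x\<bar> = \<bar>pi/2 - y\<bar>"
  proof
    assume cos_eq: "cos \<bar>pi/2 - x\<bar> = cos \<bar>pi/2 - y\<bar>"
    have "\<bar>pi/2 - x\<bar> \<le> pi" "\<bar>pi/2 - y\<bar> \<le> pi" using assms by auto
    then show "\<bar>pi/2 - x\<bar> = \<bar>pi/2 - y\<bar>" using cos_inj_pi[OF abs_ge_zero _ abs_ge_zero _ cos_eq] by blast
  qed simp
  also have "\<dots> \<longleftrightarrow> x = y \<or> x = pi - y" by (auto simp: abs_if)
  finally show ?thesis .
qed

lemma beta_pi_minus: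
  assumes "0 \<le> l" "l < pi/2"
  shows "cong2pi (beta l (pi - c)) (- beta l (c + pi))"
  using assms by (simp add: cong2pi_iff cos_beta sin_beta)

lemma sin_beta_neg:
  assumes "0 \<le> l" "l < pi/2" "0 < c" "c < pi"
  shows "sin (beta l c) < 0"
  using one_add_sin_mult_cos_pos[OF assms(1,2), of c] sin_gt_zero[OF assms(3,4)]
    cos_gt_zero_pi[of l] assms by (simp add: sin_beta)

lemma add_div_one_add_mult_strict_mono:
  fixes S S' x x' :: real
  assumes "0 \<le> S'" "S' \<le> S" "S < 1" "0 \<le> x'" "x' < x" "x \<le> 1"
  shows "(S' + x') / (1 + S' * x') < (S + x) / (1 + S * x)"
proof -
  have "S * S' < 1" using assms mult_left_le[of S' S] by linarith
  then have "0 < (x - x') * (1 - S * S')" using assms by simp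
  moreover have "0 \<le> (S - S') * (1 - x * x')" using assms mult_mono[of x 1 x' 1] by simp
  ultimately have "(S' + x') * (1 + S * x) < (S + x) * (1 + S' * x')"
    by (simp add: algebra_simps)
  moreover have "0 < 1 + S' * x'" "0 < 1 + S * x" using assms by (simp_all add: add_pos_nonneg)
  ultimately show ?thesis by (simp add: divide_simps)
qed

locale delta_level =
  fixes \<theta> :: real  \<comment> \<open>the prescribed value \<open>\<pi>s/N\<close> of \<open>\<delta>\<close>\<close>
  assumes theta_pos: "0 < \<theta>" and theta_less_pi: "\<theta> < pi"
begin

definition lambda0 :: real where "lambda0 = (pi - \<theta>) / 2"

definition K :: real where "K = tan lambda0"

definition lambda_of :: "real \<Rightarrow> real" where "lambda_of c = arctan (K / sin c)"

text \<open>\<open>sin (lambda_of c)\<close> in a form that stays continuous at \<open>c = 0\<close>, where \<open>lambda_of\<close> jumps.\<close>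

definition sin_lambda :: "real \<Rightarrow> real" where "sin_lambda c = K / sqrt ((sin c)\<^sup>2 + K\<^sup>2)"

definition g :: "real \<Rightarrow> real" where
  "g c = (sin_lambda c + cos c) / (1 + sin_lambda c * cos c)"

definition alpha :: "real \<Rightarrow> real" where "alpha c = arccos (g c)"

lemma lambda0_pos: "0 < lambda0" and lambda0_less: "lambda0 < pi/2"
  using theta_pos theta_less_pi by (simp_all add: lambda0_def)

lemma pi_minus_two_lambda0: "pi - 2 * lambda0 = \<theta>"
  by (simp add: lambda0_def field_simps)

lemma K_pos: "0 < K"
  using lambda0_pos lambda0_less by (simp add: K_def tan_gt_zero)

lemma arctan_K: "arctan K = lambda0"
  using lambda0_pos lambda0_less by (simp add: K_def arctan_tan)

lemma sin_lambda_pos: "0 < sin_lambda c"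
  using K_pos by (simp add: sin_lambda_def add_nonneg_pos)

lemma
  assumes "0 < c" "c < pi"
  shows lambda0_le_lambda_of: "lambda0 \<le> lambda_of c"
    and lambda_of_less: "lambda_of c < pi/2"
    and sin_mult_tan_lambda_of: "sin c * tan (lambda_of c) = K"
proof -
  have "0 < sin c" "sin c \<le> 1" using assms by (simp_all add: sin_gt_zero)
  then have "K \<le> K / sin c" using K_pos by (simp add: le_divide_eq mult_left_le)
  then show "lambda0 \<le> lambda_of c"
    unfolding lambda_of_def arctan_K[symmetric] by (simp add: arctan_le_iff)
  show "lambda_of c < pi/2" unfolding lambda_of_def by (rule arctan_ubound)
  show "sin c * tan (lambda_of c) = K" unfolding lambda_of_def tan_arctan using \<open>0 < sin c\<close> by simp
qed

lemma lambda_of_nonneg: "0 < c \<Longrightarrow> c < pi \<Longrightarrow> 0 \<le> lambda_of c"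
  using lambda0_le_lambda_of lambda0_pos by (meson less_le_trans less_imp_le)

lemma lambda_of_pi_minus: "lambda_of (pi - c) = lambda_of c"
  by (simp add: lambda_of_def)

lemma lambda_of_eq_iff:
  assumes "0 < c" "c < pi" "0 < c'" "c' < pi"
  shows "lambda_of c' = lambda_of c \<longleftrightarrow> c' = c \<or> c' = pi - c"
proof -
  have "lambda_of c' = lambda_of c \<longleftrightarrow> sin c' = sin c"
    using K_pos by (simp add: lambda_of_def arctan_eq_iff)
  then show ?thesis using sin_eq_sin_iff_0_pi[OF assms(3,4,1,2)] by simp
qed

lemma sin_lambda_of: "0 < c \<Longrightarrow> c < pi \<Longrightarrow> sin (lambda_of c) = sin_lambda c"
proof -
  assume "0 < c" "c < pi"
  then have "0 < sin c" by (simp add: sin_gt_zero)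
  then have "sqrt (1 + (K / sin c)\<^sup>2) = sqrt ((sin c)\<^sup>2 + K\<^sup>2) / sin c"
    by (simp add: power_divide field_simps real_sqrt_divide)
  then show ?thesis
    using \<open>0 < sin c\<close> K_pos by (simp add: lambda_of_def sin_arctan sin_lambda_def)
qed

lemma g_eq_cos_beta: "0 < c \<Longrightarrow> c < pi \<Longrightarrow> g c = cos (beta (lambda_of c) c)"
  using lambda_of_nonneg lambda_of_less by (simp add: g_def cos_beta sin_lambda_of)

lemma
  assumes "0 < c" "c < pi"
  shows beta_lambda_of: "cong2pi (beta (lambda_of c) c) (- alpha c)"
    and alpha_pos: "0 < alpha c"
    and alpha_less_pi: "alpha c < pi"
  using cong2pi_minus_arccos_cos[OF sin_beta_neg[OF lambda_of_nonneg lambda_of_less assms]] assms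
  by (simp_all add: alpha_def g_eq_cos_beta)

lemma delta_lambda_of:
  assumes "0 < c" "c < pi"
  shows "cong2pi (delta (lambda_of c) c) \<theta>"
  using delta_cong[OF lambda_of_nonneg[OF assms] lambda_of_less[OF assms], of c] assms
  by (simp add: sin_mult_tan_lambda_of arctan_K pi_minus_two_lambda0)

lemma lambda_of_unique:
  assumes "0 \<le> l" "l < pi/2" "0 < c" "c < pi" "cong2pi (delta l c) \<theta>"
  shows "l = lambda_of c"
proof -
  have "cong2pi (pi - 2 * arctan (sin c * tan l)) \<theta>"
    using cong2pi_trans[OF cong2pi_sym[OF delta_cong[OF assms(1,2)]] assms(5)] .
  moreover have "- (pi/2) < arctan (sin c * tan l)" "arctan (sin c * tan l) < pi/2"
    using arctan_bounded by blast+
  ultimately have "pi - 2 * arctan (sin c * tan l) = \<theta>"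
    using theta_pos theta_less_pi by (intro cong2pi_imp_eq[where a = 0]) auto
  then have "arctan (sin c * tan l) = arctan K" using arctan_K pi_minus_two_lambda0 by simp
  then have "sin c * tan l = K" by (simp add: arctan_eq_iff)
  moreover have "0 < sin c" using sin_gt_zero[OF assms(3,4)] .
  ultimately have "tan l = K / sin c" by (simp add: field_simps)
  then show ?thesis unfolding lambda_of_def using assms(1,2) arctan_tan[of l] by simp
qed

lemma alpha_pi_minus:
  assumes "0 < c" "c < pi"
  shows "alpha (pi - c) = \<theta> - alpha c"
proof -
  define l where "l = lambda_of c"
  have l: "0 \<le> l" "l < pi/2"
    unfolding l_def using lambda_of_nonneg[OF assms] lambda_of_less[OF assms] by blast+
  have "beta l (c + pi) = beta l c + delta l c" by (simp add: delta_def)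
  then have "cong2pi (beta l (c + pi)) (- alpha c + \<theta>)"
    using cong2pi_add[OF beta_lambda_of delta_lambda_of] assms by (simp add: l_def)
  then have "cong2pi (- beta l (c + pi)) (alpha c - \<theta>)" using cong2pi_minus by fastforce
  then have "cong2pi (beta l (pi - c)) (alpha c - \<theta>)"
    using cong2pi_trans[OF beta_pi_minus[OF l]] by blast
  moreover have "cong2pi (beta l (pi - c)) (- alpha (pi - c))"
    using beta_lambda_of[of "pi - c"] assms by (simp add: l_def lambda_of_pi_minus)
  ultimately have "cong2pi (- alpha (pi - c)) (alpha c - \<theta>)" by (metis cong2pi_sym cong2pi_trans)
  then have "- alpha (pi - c) = alpha c - \<theta>"
    using alpha_pos[of c] alpha_less_pi[of c] alpha_pos[of "pi - c"] alpha_less_pi[of "pi - c"]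
      assms theta_pos theta_less_pi by (intro cong2pi_imp_eq[where a = "- pi"]) auto
  then show ?thesis by simp
qed

lemma g_pi_half: "g (pi/2) = cos (\<theta>/2)"
proof -
  have "g (pi/2) = sin (arctan K)" by (simp add: g_def sin_lambda_def sin_arctan add.commute)
  also have "\<dots> = cos (pi/2 - lambda0)" by (simp add: arctan_K sin_cos_eq)
  also have "pi/2 - lambda0 = \<theta>/2" using pi_minus_two_lambda0 by simp
  finally show ?thesis .
qed

lemma alpha_pi_half: "alpha (pi/2) = \<theta>/2"
  using theta_pos theta_less_pi by (simp add: alpha_def g_pi_half arccos_cos)

lemma g_zero: "g 0 = 1"
  using K_pos by (simp add: g_def sin_lambda_def)

lemma sin_lambda_less_one:
  assumes "0 < c" "c < pi"
  shows "sin_lambda c < 1"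
proof -
  have "K < sqrt ((sin c)\<^sup>2 + K\<^sup>2)" using sin_gt_zero[OF assms] by (intro real_less_rsqrt) simp
  moreover from this have "0 < sqrt ((sin c)\<^sup>2 + K\<^sup>2)" using K_pos by linarith
  ultimately show ?thesis by (simp add: sin_lambda_def divide_less_eq_1_pos)
qed

lemma sin_lambda_strict_antimono:
  assumes "\<bar>sin c\<bar> < \<bar>sin c'\<bar>"
  shows "sin_lambda c' < sin_lambda c"
proof -
  have "(sin c)\<^sup>2 < (sin c')\<^sup>2" using assms by (metis abs_le_square_iff not_le)
  then have "sqrt ((sin c)\<^sup>2 + K\<^sup>2) < sqrt ((sin c')\<^sup>2 + K\<^sup>2)" by simp
  moreover have "0 < sqrt ((sin c)\<^sup>2 + K\<^sup>2)" "0 < sqrt ((sin c')\<^sup>2 + K\<^sup>2)"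
    using K_pos by (simp_all add: add_nonneg_pos)
  ultimately show ?thesis unfolding sin_lambda_def using K_pos
    by (intro divide_strict_left_mono) simp_all
qed

lemma g_strict_antimono:
  assumes "0 < c" "c < c'" "c' \<le> pi/2"
  shows "g c' < g c"
proof -
  have "0 < sin c" "sin c < sin c'" using assms by (simp_all add: sin_gt_zero sin_mono_less_eq)
  then have "sin_lambda c' < sin_lambda c" by (intro sin_lambda_strict_antimono) simp
  moreover have "sin_lambda c < 1" using assms by (intro sin_lambda_less_one) simp_all
  moreover have "cos c' < cos c" "0 \<le> cos c'" using assms by (simp_all add: cos_mono_less_eq cos_ge_zero)
  ultimately show ?thesis unfolding g_def
    by (intro add_div_one_add_mult_strict_mono) (simp_all add: less_imp_le sin_lambda_pos)
qed

lemma alpha_strict_mono_on_half: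
  assumes "0 < c" "c < c'" "c' \<le> pi/2"
  shows "alpha c < alpha c'"
proof -
  have "-1 \<le> g c'" "g c \<le> 1" using assms by (simp_all add: g_eq_cos_beta)
  then show ?thesis unfolding alpha_def using g_strict_antimono[OF assms] by (intro arccos_less_arccos)
qed

lemma alpha_strict_mono: "strict_mono_on {0<..<pi} alpha"
proof (rule strict_mono_onI)
  fix c c' assume c: "c \<in> {0<..<pi}" and c': "c' \<in> {0<..<pi}" and "c < c'"
  consider "c' \<le> pi/2" | "pi/2 \<le> c" | "c < pi/2" "pi/2 < c'" by linarith
  then show "alpha c < alpha c'"
  proof cases
    case 1
    then show ?thesis using alpha_strict_mono_on_half c \<open>c < c'\<close> by simp
  next
    case 2
    then have "alpha (pi - c') < alpha (pi - c)" using c' \<open>c < c'\<close> by (intro alpha_strict_mono_on_half) auto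
    then show ?thesis using c c' by (simp add: alpha_pi_minus)
  next
    case 3
    then have "alpha c < \<theta>/2" "alpha (pi - c') < \<theta>/2"
      using c c' alpha_strict_mono_on_half[of _ "pi/2"] by (auto simp: alpha_pi_half)
    then show ?thesis using c' by (simp add: alpha_pi_minus)
  qed
qed

lemma alpha_eq_iff: "c \<in> {0<..<pi} \<Longrightarrow> c' \<in> {0<..<pi} \<Longrightarrow> alpha c = alpha c' \<longleftrightarrow> c = c'"
  using strict_mono_on_imp_inj_on[OF alpha_strict_mono] by (auto dest: inj_onD)

lemma continuous_on_g: "continuous_on {0..pi/2} g"
proof -
  have "sqrt ((sin c)\<^sup>2 + K\<^sup>2) \<noteq> 0" for c using K_pos by (simp add: add_nonneg_pos)
  then have "continuous_on {0..pi/2} sin_lambda"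
    unfolding sin_lambda_def by (intro continuous_intros) auto
  moreover have "1 + sin_lambda c * cos c \<noteq> 0" if "c \<in> {0..pi/2}" for c
  proof -
    have "0 \<le> sin_lambda c * cos c" using that sin_lambda_pos[of c] by (simp add: cos_ge_zero)
    then show ?thesis by linarith
  qed
  ultimately show ?thesis unfolding g_def by (intro continuous_intros) auto
qed

lemma alpha_surj_on_half:
  assumes "0 < a" "a \<le> \<theta>/2"
  obtains c where "0 < c" "c \<le> pi/2" "alpha c = a"
proof -
  have "a < pi" using assms theta_less_pi by simp
  then have "cos a < 1" using assms cos_monotone_0_pi[of 0 a] by simp
  moreover have "cos (\<theta>/2) \<le> cos a" using assms theta_less_pi by (intro cos_monotone_0_pi_le) simp_all
  ultimately obtain c where c: "0 \<le> c" "c \<le> pi/2" "g c = cos a"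
    using IVT2'[of g "pi/2" "cos a" 0] continuous_on_g by (auto simp: g_zero g_pi_half)
  then have "0 < c" using \<open>cos a < 1\<close> g_zero by (cases "c = 0") auto
  moreover have "alpha c = a" using c(3) assms \<open>a < pi\<close> by (simp add: alpha_def arccos_cos)
  ultimately show ?thesis using that c(2) by blast
qed

lemma bij_betw_alpha: "bij_betw alpha {0<..<pi} {0<..<\<theta>}"
proof (rule bij_betw_imageI)
  show "inj_on alpha {0<..<pi}" by (rule strict_mono_on_imp_inj_on[OF alpha_strict_mono])
  show "alpha ` {0<..<pi} = {0<..<\<theta>}"
  proof (intro equalityI subsetI)
    fix a assume "a \<in> alpha ` {0<..<pi}"
    then obtain c where "0 < c" "c < pi" "a = alpha c" by auto
    then show "a \<in> {0<..<\<theta>}"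
      using alpha_pos[of c] alpha_pos[of "pi - c"] by (simp add: alpha_pi_minus)
  next
    fix a assume a: "a \<in> {0<..<\<theta>}"
    show "a \<in> alpha ` {0<..<pi}"
    proof (cases "a \<le> \<theta>/2")
      case True
      with a obtain c where "0 < c" "c \<le> pi/2" "alpha c = a" by (auto elim: alpha_surj_on_half)
      then show ?thesis by force
    next
      case False
      with a have "0 < \<theta> - a" "\<theta> - a \<le> \<theta>/2" by auto
      then obtain c where c: "0 < c" "c \<le> pi/2" "alpha c = \<theta> - a" by (rule alpha_surj_on_half)
      then have "alpha (pi - c) = a" by (simp add: alpha_pi_minus)
      moreover have "pi - c \<in> {0<..<pi}" using c by simp
      ultimately show ?thesis by force
    qed
  qed
qed

lemma solution_iff:
  assumes "0 < a" "a < pi"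
  shows "(lambda0 \<le> l \<and> l < pi/2 \<and> 0 < c \<and> c < pi \<and> cong2pi (delta l c) \<theta> \<and> cong2pi (beta l c) (- a))
    \<longleftrightarrow> (0 < c \<and> c < pi \<and> l = lambda_of c \<and> alpha c = a)"
proof
  assume sol: "lambda0 \<le> l \<and> l < pi/2 \<and> 0 < c \<and> c < pi \<and> cong2pi (delta l c) \<theta> \<and> cong2pi (beta l c) (- a)"
  then have c: "0 < c" "c < pi" and l: "l = lambda_of c"
    using lambda0_pos by (auto intro!: lambda_of_unique)
  then have "cong2pi (- alpha c) (- a)" using sol beta_lambda_of by (metis cong2pi_sym cong2pi_trans)
  then have "alpha c = a" using cong2pi_minus[of "- alpha c" "- a"]
      alpha_pos[OF c] alpha_less_pi[OF c] assms by (intro cong2pi_imp_eq[where a = 0]) auto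
  with c l show "0 < c \<and> c < pi \<and> l = lambda_of c \<and> alpha c = a" by simp
next
  assume "0 < c \<and> c < pi \<and> l = lambda_of c \<and> alpha c = a"
  then show "lambda0 \<le> l \<and> l < pi/2 \<and> 0 < c \<and> c < pi \<and> cong2pi (delta l c) \<theta> \<and> cong2pi (beta l c) (- a)"
    using lambda0_le_lambda_of lambda_of_less delta_lambda_of beta_lambda_of by blast
qed

end

locale lam_Cf_setting =
  fixes N s :: nat
  assumes s_pos: "0 < s" and s_less_N: "s < N"
begin

definition theta :: real where "theta = pi / real N * real s"

lemma N_pos: "0 < real N"
  using s_pos s_less_N by simp

lemma theta_half: "theta / 2 = pi / real N * (real s / 2)"
  unfolding theta_def by simp

lemma theta_minus_angle: "theta - pi / real N * t = pi / real N * (real s - t)"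
  unfolding theta_def by (simp add: right_diff_distrib)

lemma angle_less_theta: "t < real s \<Longrightarrow> pi / real N * t < theta"
  unfolding theta_def using N_pos by (intro mult_strict_left_mono) simp_all

end

sublocale lam_Cf_setting \<subseteq> delta_level theta
proof
  show "0 < theta" unfolding theta_def using s_pos N_pos by simp
  have "pi / real N * real s < pi / real N * real N"
    using s_less_N N_pos by (intro mult_strict_left_mono) simp_all
  then show "theta < pi" unfolding theta_def using N_pos by simp
qed

context lam_Cf_setting
begin

lemma lambda0_eq: "lambda0 = pi/2 - pi / (2 * real N) * real s"
  using pi_minus_two_lambda0 unfolding theta_def by (simp add: field_simps)

lemma is_sol_iff:
  assumes "0 < t" "t < real s"
  shows "is_sol N s t l c \<longleftrightarrow> 0 < c \<and> c < pi \<and> l = lambda_of c \<and> alpha c = pi / real N * t"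
proof -
  note lambda0_eq
  moreover have "0 < pi / real N * t" "pi / real N * t < pi"
    using assms N_pos angle_less_theta theta_less_pi by (auto intro: less_trans)
  ultimately show ?thesis
    using solution_iff[of "pi / real N * t" l c] by (auto simp: is_sol_def theta_def)
qed

lemma ex1_is_sol:
  assumes "0 < t" "t < real s"
  shows "\<exists>!p. is_sol N s t (fst p) (snd p)"
proof -
  have "pi / real N * t \<in> alpha ` {0<..<pi}"
    using assms N_pos angle_less_theta bij_betw_alpha by (simp add: bij_betw_def)
  then obtain c where c: "c \<in> {0<..<pi}" "alpha c = pi / real N * t" by auto
  show ?thesis
  proof (rule ex1I[of _ "(lambda_of c, c)"])
    show "is_sol N s t (fst (lambda_of c, c)) (snd (lambda_of c, c))" using c assms by (simp add: is_sol_iff)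
  next
    fix p assume "is_sol N s t (fst p) (snd p)"
    then have "snd p \<in> {0<..<pi}" "fst p = lambda_of (snd p)" "alpha (snd p) = alpha c"
      using assms c by (simp_all add: is_sol_iff)
    then show "p = (lambda_of c, c)" using alpha_eq_iff[of "snd p" c] c by (simp add: prod_eq_iff)
  qed
qed

lemma Cf_lam:
  assumes "0 < t" "t < real s"
  shows "Cf N s t \<in> {0<..<pi}" "lam N s t = lambda_of (Cf N s t)"
    and "alpha (Cf N s t) = pi / real N * t"
  using theI'[OF ex1_is_sol[OF assms]] assms by (simp_all add: lam_def Cf_def is_sol_iff)

lemma Cf_eqI:
  assumes "0 < t" "t < real s" "c \<in> {0<..<pi}" "alpha c = pi / real N * t"
  shows "Cf N s t = c"
proof -
  have "alpha (Cf N s t) = alpha c" using Cf_lam(3)[OF assms(1,2)] assms(4) by simp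
  then show ?thesis using alpha_eq_iff[OF Cf_lam(1)[OF assms(1,2)] assms(3)] by simp
qed

lemma Cf_half: "Cf N s (real s / 2) = pi/2"
  using s_pos by (intro Cf_eqI) (simp_all add: alpha_pi_half theta_half)

lemma lam_half: "lam N s (real s / 2) = pi/2 - pi / (2 * real N) * real s"
  using Cf_lam(2)[of "real s / 2"] s_pos by (simp add: Cf_half lambda_of_def arctan_K lambda0_eq)

lemma Cf_reflect:
  assumes "0 < t" "t < real s"
  shows "Cf N s (real s - t) = pi - Cf N s t"
proof (rule Cf_eqI)
  have "alpha (pi - Cf N s t) = theta - alpha (Cf N s t)"
    using Cf_lam(1)[OF assms] by (simp add: alpha_pi_minus)
  also have "\<dots> = pi / real N * (real s - t)" using Cf_lam(3)[OF assms] theta_minus_angle by simp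
  finally show "alpha (pi - Cf N s t) = pi / real N * (real s - t)" .
qed (use Cf_lam(1)[OF assms] assms in auto)

lemma lam_reflect:
  assumes "0 < t" "t < real s"
  shows "lam N s (real s - t) = lam N s t"
  using Cf_lam(2)[of "real s - t"] Cf_lam(2)[OF assms] assms by (simp add: Cf_reflect lambda_of_pi_minus)

lemma inj_on_Cf: "inj_on (Cf N s) {0<..<real s}"
proof (rule inj_onI)
  fix t t' assume "t \<in> {0<..<real s}" "t' \<in> {0<..<real s}" "Cf N s t = Cf N s t'"
  then have "pi / real N * t = pi / real N * t'" using Cf_lam(3) by (metis greaterThanLessThan_iff)
  then show "t = t'" using N_pos by simp
qed

lemma lam_level_set:
  assumes "0 < t" "t < real s"
  shows "{t' \<in> {0<..<real s}. lam N s t' = lam N s t} = {t, real s - t}"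
proof -
  have "lam N s t' = lam N s t \<longleftrightarrow> t' = t \<or> t' = real s - t" if "t' \<in> {0<..<real s}" for t'
  proof -
    have "lam N s t' = lam N s t \<longleftrightarrow> Cf N s t' = Cf N s t \<or> Cf N s t' = Cf N s (real s - t)"
      using that assms Cf_lam[of t'] Cf_lam[OF assms] by (simp add: lambda_of_eq_iff Cf_reflect)
    also have "\<dots> \<longleftrightarrow> t' = t \<or> t' = real s - t"
      using that assms inj_on_Cf by (auto dest: inj_onD)
    finally show ?thesis .
  qed
  then show ?thesis using assms by auto
qed

lemma bij_betw_Cf: "bij_betw (Cf N s) {0<..<real s} {0<..<pi}"
proof (rule bij_betw_imageI[OF inj_on_Cf], intro equalityI subsetI)
  fix c assume "c \<in> Cf N s ` {0<..<real s}"
  then show "c \<in> {0<..<pi}" using Cf_lam(1) by auto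
next
  fix c assume c: "c \<in> {0<..<pi}"
  define t where "t = real N / pi * alpha c"
  have "alpha c \<in> {0<..<theta}" using c bij_betw_alpha by (auto simp: bij_betw_def)
  then have "0 < t" "t < real s" using N_pos unfolding t_def theta_def by (auto simp: field_simps)
  moreover have "alpha c = pi / real N * t" using N_pos unfolding t_def by simp
  ultimately show "c \<in> Cf N s ` {0<..<real s}" using c Cf_eqI by force
qed

end

theorem lemma24:
  fixes N s :: nat
  assumes "N > 2" and "1 \<le> s" and "s < N"
  shows "(\<forall>t::real. 0 < t \<and> t < real s \<longrightarrow> (\<exists>!p. is_sol N s t (fst p) (snd p)))
    \<and> lam N s (real s / 2) = pi/2 - pi / (2 * real N) * real s
    \<and> Cf N s (real s / 2) = pi/2
    \<and> (\<forall>t::real. 0 < t \<and> t < real s \<longrightarrow>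
          lam N s (real s - t) = lam N s t
        \<and> {t' \<in> {0 <..< real s}. lam N s t' = lam N s t} = {t, real s - t})
    \<and> bij_betw (Cf N s) {0 <..< real s} {0 <..< pi}
    \<and> (\<forall>t::real. 0 < t \<and> t < real s \<longrightarrow> Cf N s (real s - t) = pi - Cf N s t)"
proof -
  interpret lam_Cf_setting N s
    using assms(2,3) by unfold_locales simp_all
  show ?thesis
    using ex1_is_sol lam_half Cf_half lam_reflect lam_level_set bij_betw_Cf Cf_reflect by blast
qed

end
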